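(* Let $\mathbb S[\boldsymbol\kappa]$ be a Hurwitz-stable Child-Selection matrix that contains an unstable-positive feedback as a principal submatrix. Then $\mathbb S[\boldsymbol\kappa]$ is $D$-Hopf.
   Context: For a reaction network with reactant coefficients $s^j_m$ and stoichiometric matrix $\mathbb S$, a $k$-Child-Selection $\boldsymbol\kappa=(\kappa,E_\kappa,J)$ is a bijection $J:\kappa\to E_\kappa$ between $k$ species and $k$ reactions with $s^{J(m)}_m>0$; its CS-matrix is $\mathbb S[\boldsymbol\kappa]_{ml}=\mathbb S_{m,J(l)}$. Hurwitz-stable: all eigenvalues have negative real part; Hurwitz-unstable: some eigenvalue has positive real part. An unstable core is a Hurwitz-unstable CS-matrix with no Hurwitz-unstable proper principal submatrix; a $k\times k$ unstable core is an unstable-positive feedback if $\operatorname{sign}\det=(-1)^{k-1}$ and an unstable-negative feedback if $\operatorname{sign}\det=(-1)^k$. Inertia: numbers of eigenvalues with negative, positive, zero real part. $A$ is $D$-Hopf if there exist an invertible principal submatrix $A[\kappa]$ and positive diagonal $D_1,D_2$ with $\operatorname{inertia}(A[\kappa]D_1)\ne\operatorname{inertia}(A[\kappa]D_2)$. *)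

theory Defs
  imports "Jordan_Normal_Form.Char_Poly" "HOL-Computational_Algebra.Polynomial"
begin

text \<open>Matrices indexed by a finite set of natural numbers I (principal submatrices are
restrictions to subsets).\<close>

definition cmat :: "nat set \<Rightarrow> (nat \<Rightarrow> nat \<Rightarrow> real) \<Rightarrow> complex mat" where
  "cmat I A = mat (card I) (card I)
     (\<lambda>(a, b). complex_of_real (A (sorted_list_of_set I ! a) (sorted_list_of_set I ! b)))"

definition rmat :: "nat set \<Rightarrow> (nat \<Rightarrow> nat \<Rightarrow> real) \<Rightarrow> real mat" where
  "rmat I A = mat (card I) (card I)
     (\<lambda>(a, b). A (sorted_list_of_set I ! a) (sorted_list_of_set I ! b))"

definition hurwitz_stable :: "nat set \<Rightarrow> (nat \<Rightarrow> nat \<Rightarrow> real) \<Rightarrow> bool" where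
  "hurwitz_stable I A \<longleftrightarrow> (\<forall>z. eigenvalue (cmat I A) z \<longrightarrow> Re z < 0)"

definition hurwitz_unstable :: "nat set \<Rightarrow> (nat \<Rightarrow> nat \<Rightarrow> real) \<Rightarrow> bool" where
  "hurwitz_unstable I A \<longleftrightarrow> (\<exists>z. eigenvalue (cmat I A) z \<and> Re z > 0)"

definition inertia :: "nat set \<Rightarrow> (nat \<Rightarrow> nat \<Rightarrow> real) \<Rightarrow> nat \<times> nat \<times> nat" where
  "inertia I A = (let p = char_poly (cmat I A) in
     ((\<Sum>z\<in>{z. poly p z = 0 \<and> Re z < 0}. order z p),
      (\<Sum>z\<in>{z. poly p z = 0 \<and> Re z > 0}. order z p),
      (\<Sum>z\<in>{z. poly p z = 0 \<and> Re z = 0}. order z p)))"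

text \<open>Reaction network: species {..<n}, reactions {..<r}, reactant coefficients
s j m = s^j_m (reaction j, species m), stoichiometric matrix S m j.
A child selection (kappa, E_kappa, J).\<close>

definition child_selection ::
  "nat \<Rightarrow> nat \<Rightarrow> (nat \<Rightarrow> nat \<Rightarrow> real) \<Rightarrow> nat set \<Rightarrow> nat set \<Rightarrow> (nat \<Rightarrow> nat) \<Rightarrow> bool" where
  "child_selection n r s \<kappa> E\<kappa> J \<longleftrightarrow>
     \<kappa> \<subseteq> {..<n} \<and> E\<kappa> \<subseteq> {..<r} \<and> bij_betw J \<kappa> E\<kappa> \<and> (\<forall>m\<in>\<kappa>. s (J m) m > 0)"

definition cs_matrix :: "(nat \<Rightarrow> nat \<Rightarrow> real) \<Rightarrow> (nat \<Rightarrow> nat) \<Rightarrow> nat \<Rightarrow> nat \<Rightarrow> real" where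
  "cs_matrix S J = (\<lambda>m l. S m (J l))"

definition unstable_core :: "nat set \<Rightarrow> (nat \<Rightarrow> nat \<Rightarrow> real) \<Rightarrow> bool" where
  "unstable_core I A \<longleftrightarrow> hurwitz_unstable I A \<and> (\<forall>I'. I' \<subset> I \<longrightarrow> \<not> hurwitz_unstable I' A)"

definition unstable_positive_feedback :: "nat set \<Rightarrow> (nat \<Rightarrow> nat \<Rightarrow> real) \<Rightarrow> bool" where
  "unstable_positive_feedback I A \<longleftrightarrow>
     unstable_core I A \<and> sgn (det (rmat I A)) = (-1) ^ (card I - 1)"

definition D_Hopf :: "nat set \<Rightarrow> (nat \<Rightarrow> nat \<Rightarrow> real) \<Rightarrow> bool" where
  "D_Hopf I A \<longleftrightarrow> (\<exists>K \<subseteq> I. det (rmat K A) \<noteq> 0 \<and>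
     (\<exists>D1 D2 :: nat \<Rightarrow> real. (\<forall>i\<in>K. D1 i > 0) \<and> (\<forall>i\<in>K. D2 i > 0) \<and>
        inertia K (\<lambda>i j. A i j * D1 j) \<noteq> inertia K (\<lambda>i j. A i j * D2 j)))"

end

theory Submission
  imports Defs
begin

text \<open>If K is an unstable-positive feedback of size k, the sign condition
sgn det S[K] = (-1)^(k-1) says that the characteristic polynomial of S[K] is negative at 0,
hence at some x > 0. Multiply the columns of S[\<kappa>] outside K by \<epsilon>. At \<epsilon> = 0 those
columns vanish and the characteristic polynomial becomes X^|\<kappa> - K| times that of S[K], so
for small \<epsilon> > 0 it is still negative at x; being monic, it has a real root beyond x. Hence
S[\<kappa>] D with D = diag(1 on K, \<epsilon> elsewhere) has a positive eigenvalue, while S[\<kappa>] = S[\<kappa>] Id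
is Hurwitz-stable, hence invertible: the two inertias differ.\<close>

lemma nth_remove1_nth:
  assumes "distinct xs" "a < length xs" "i < length xs - 1"
  shows "remove1 (xs ! a) xs ! i = xs ! (if i < a then i else Suc i)"
  using assms
proof (induction xs arbitrary: a i)
  case Nil
  then show ?case by simp
next
  case (Cons y ys)
  show ?case
  proof (cases a)
    case 0
    then show ?thesis by simp
  next
    case (Suc a')
    then have "ys ! a' \<noteq> y" using Cons.prems by (auto simp: nth_mem)
    moreover have "remove1 (ys ! a') ys ! i' = ys ! (if i' < a' then i' else Suc i')"
      if "i = Suc i'" for i'
      using Cons.IH[of a' i'] Cons.prems Suc that by simp
    ultimately show ?thesis using Suc by (cases i) auto
  qed
qed

lemma rmat_carrier [simp]: "rmat I A \<in> carrier_mat (card I) (card I)"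
  unfolding rmat_def by simp

lemma dim_rmat [simp]: "dim_row (rmat I A) = card I" "dim_col (rmat I A) = card I"
  unfolding rmat_def by simp_all

lemma sorted_list_of_set_nth_mem: "i < card I \<Longrightarrow> sorted_list_of_set I ! i \<in> I"
  by (metis card.infinite length_sorted_list_of_set less_nat_zero_code nth_mem
      set_sorted_list_of_set)

lemma rmat_cong:
  assumes "\<And>i j. i \<in> I \<Longrightarrow> j \<in> I \<Longrightarrow> A i j = B i j"
  shows "rmat I A = rmat I B"
  unfolding rmat_def using assms sorted_list_of_set_nth_mem by (intro eq_matI) auto

lemma cmat_carrier [simp]: "cmat I A \<in> carrier_mat (card I) (card I)"
  unfolding cmat_def by simp

lemma cmat_eq_map_rmat: "cmat I A = map_mat complex_of_real (rmat I A)"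
  unfolding cmat_def rmat_def by (rule eq_matI) auto

lemma char_poly_cmat: "char_poly (cmat I A) = map_poly complex_of_real (char_poly (rmat I A))"
  unfolding cmat_eq_map_rmat by (rule of_real_hom.char_poly_hom[OF rmat_carrier])

lemma poly_char_poly_rmat:
  "poly (char_poly (rmat I A)) x = det (rmat I (\<lambda>i j. (if i = j then x else 0) - A i j))"
proof -
  have "- char_matrix (rmat I A) x = rmat I (\<lambda>i j. (if i = j then x else 0) - A i j)"
    by (rule eq_matI) (auto simp: char_matrix_def rmat_def nth_eq_iff_index_eq)
  then show ?thesis using char_poly_matrix[OF rmat_carrier] by simp
qed

lemma mat_delete_rmat:
  assumes "finite I" "a < card I"
  shows "mat_delete (rmat I A) a a = rmat (I - {sorted_list_of_set I ! a}) A"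
proof -
  let ?xs = "sorted_list_of_set I"
  have xs: "sorted_list_of_set (I - {?xs ! a}) = remove1 (?xs ! a) ?xs"
    using sorted_list_of_set_remove[OF assms(1)] by simp
  have card: "card (I - {?xs ! a}) = card I - 1"
    using assms by (simp add: sorted_list_of_set_nth_mem)
  show ?thesis
  proof (rule eq_matI)
    fix i j assume "i < dim_row (rmat (I - {?xs ! a}) A)" "j < dim_col (rmat (I - {?xs ! a}) A)"
    then have "i < card I - 1" "j < card I - 1" using card by (auto simp: rmat_def)
    then show "mat_delete (rmat I A) a a $$ (i, j) = rmat (I - {?xs ! a}) A $$ (i, j)"
      using assms card nth_remove1_nth[of ?xs a i] nth_remove1_nth[of ?xs a j]
      by (simp add: mat_delete_def rmat_def xs)
  qed (use card in \<open>auto simp: rmat_def mat_delete_def\<close>)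
qed

lemma char_poly_rmat_zero_column:
  assumes "finite I" "x \<in> I" "\<And>i. i \<in> I \<Longrightarrow> A i x = 0"
  shows "char_poly (rmat I A) = monom 1 1 * char_poly (rmat (I - {x}) A)"
proof -
  let ?xs = "sorted_list_of_set I"
  obtain a where a: "a < card I" "?xs ! a = x"
    using assms(1,2) by (metis in_set_conv_nth length_sorted_list_of_set set_sorted_list_of_set)
  have "rmat I A $$ (j, a) = 0" if "j < card I" for j
    using that a assms by (simp add: rmat_def sorted_list_of_set_nth_mem)
  then show ?thesis
    using char_poly_0_column[OF _ rmat_carrier a(1)] mat_delete_rmat[OF assms(1) a(1)] a(2)
    by simp
qed

lemma char_poly_rmat_zero_columns:
  assumes "finite I" "L \<subseteq> I" "\<And>i j. i \<in> I \<Longrightarrow> j \<in> L \<Longrightarrow> A i j = 0"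
  shows "char_poly (rmat I A) = monom 1 (card L) * char_poly (rmat (I - L) A)"
proof -
  have "finite L" using assms(1,2) by (rule finite_subset[rotated])
  then show ?thesis using assms(2,3)
  proof (induction L rule: finite_induct)
    case empty
    then show ?case by simp
  next
    case (insert x L)
    have "char_poly (rmat (I - L) A) = monom 1 1 * char_poly (rmat (I - L - {x}) A)"
      using insert assms(1) by (intro char_poly_rmat_zero_column) auto
    moreover have "I - L - {x} = I - insert x L" by blast
    ultimately show ?case
      using insert by (simp add: mult_monom)
  qed
qed

lemma continuous_on_det_rmat:
  assumes "\<And>i j. continuous_on S (\<lambda>t. F t i j)"
  shows "continuous_on S (\<lambda>t. det (rmat I (F t)))"
proof -
  let ?xs = "sorted_list_of_set I" and ?n = "card I"
  have "det (rmat I (F t)) = (\<Sum>p\<in>{p. p permutes {0..<?n}}.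
      signof p * (\<Prod>i = 0..<?n. F t (?xs ! i) (?xs ! p i)))" for t
    unfolding det_def'[OF rmat_carrier]
    by (intro sum.cong prod.cong refl arg_cong2[where f = "(*)"])
      (auto simp: rmat_def permutes_in_image)
  then show ?thesis
    by (simp only:) (intro continuous_intros assms)
qed

lemma exists_right_of_isCont_neg:
  fixes f :: "real \<Rightarrow> real"
  assumes "isCont f a" "f a < 0"
  shows "\<exists>x>a. f x < 0"
proof -
  have "\<forall>\<^sub>F x in at_right a. f x < 0"
    using tendsto_mono[OF at_le assms(1)[unfolded isCont_def]] assms(2)
    by (rule order_tendstoD(2)) simp
  then obtain b where "b > a" "\<forall>y>a. y < b \<longrightarrow> f y < 0"
    unfolding eventually_at_right_field by blast
  then show ?thesis by (intro exI[of _ "(a + b) / 2"]) auto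
qed

lemma real_poly_root_above:
  fixes p :: "real poly"
  assumes "lead_coeff p > 0" "poly p x < 0"
  shows "\<exists>y>x. poly p y = 0"
proof -
  obtain N where N: "\<forall>y\<ge>N. poly p y \<ge> lead_coeff p"
    using poly_pinfty_gt_lc[OF assms(1)] by blast
  have "poly p (max N (x + 1)) \<ge> lead_coeff p" using N by simp
  then have "poly p (max N (x + 1)) > 0" using assms(1) by linarith
  then show ?thesis using poly_IVT_pos[of x "max N (x + 1)" p] assms(2) by force
qed

lemma hurwitz_unstable_iff_inertia:
  "hurwitz_unstable I A \<longleftrightarrow> fst (snd (inertia I A)) \<noteq> 0"
proof -
  let ?p = "char_poly (cmat I A)"
  have "?p \<noteq> 0" using degree_monic_char_poly[OF cmat_carrier, of I A] by auto
  then have fin: "finite {z. poly ?p z = 0 \<and> Re z > 0}"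
    by (rule finite_subset[rotated, OF poly_roots_finite]) auto
  have "fst (snd (inertia I A)) = (\<Sum>z\<in>{z. poly ?p z = 0 \<and> Re z > 0}. order z ?p)"
    by (simp add: inertia_def Let_def)
  also have "\<dots> \<noteq> 0 \<longleftrightarrow> (\<exists>z\<in>{z. poly ?p z = 0 \<and> Re z > 0}. order z ?p \<noteq> 0)"
    by (simp add: sum_eq_0_iff[OF fin])
  also have "\<dots> \<longleftrightarrow> (\<exists>z. poly ?p z = 0 \<and> Re z > 0)"
    using \<open>?p \<noteq> 0\<close> by (auto simp: order_root)
  also have "\<dots> \<longleftrightarrow> hurwitz_unstable I A"
    by (simp add: hurwitz_unstable_def eigenvalue_root_char_poly[OF cmat_carrier])
  finally show ?thesis ..
qed

lemma hurwitz_unstable_if_char_poly_neg: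
  assumes "poly (char_poly (rmat I A)) x < 0" "x > 0"
  shows "hurwitz_unstable I A"
proof -
  have "lead_coeff (char_poly (rmat I A)) = 1"
    using degree_monic_char_poly[OF rmat_carrier] by simp
  then obtain y where "y > x" "poly (char_poly (rmat I A)) y = 0"
    using real_poly_root_above[of "char_poly (rmat I A)" x] assms(1) by auto
  then have "eigenvalue (cmat I A) (complex_of_real y)"
    by (simp add: eigenvalue_root_char_poly[OF cmat_carrier] char_poly_cmat
        of_real_hom.poly_map_poly)
  then show ?thesis unfolding hurwitz_unstable_def using \<open>y > x\<close> assms(2) by force
qed

lemma hurwitz_stable_det_nonzero:
  assumes "hurwitz_stable I A"
  shows "det (rmat I A) \<noteq> 0"
proof
  assume "det (rmat I A) = 0"
  moreover have "char_matrix (cmat I A) 0 = cmat I A"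
    by (rule eq_matI) (auto simp: char_matrix_def cmat_def)
  ultimately have "det (char_matrix (cmat I A) 0) = 0"
    by (simp add: cmat_eq_map_rmat)
  then have "eigenvalue (cmat I A) 0"
    by (simp add: eigenvalue_det[OF cmat_carrier])
  then show False using assms by (force simp: hurwitz_stable_def)
qed

lemma unstable_positive_feedback_char_poly_neg:
  assumes "unstable_positive_feedback K A"
  shows "\<exists>x>0. poly (char_poly (rmat K A)) x < 0"
proof -
  have "hurwitz_unstable K A"
    using assms by (simp add: unstable_positive_feedback_def unstable_core_def)
  then have "card K > 0"
    using eigenvalue_imp_nonzero_dim[OF cmat_carrier] unfolding hurwitz_unstable_def by blast
  then obtain k where k: "card K = Suc k"
    using gr0_implies_Suc by blast
  have sign: "sgn (det (rmat K A)) = (-1) ^ k"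
    using assms k by (simp add: unstable_positive_feedback_def)
  then have "det (rmat K A) \<noteq> 0"
    by (auto simp: sgn_0_0)
  then have "(-1) ^ k * det (rmat K A) > 0"
    using sign by (metis abs_sgn mult.commute zero_less_abs_iff)
  moreover have "rmat K (\<lambda>i j. - A i j) = (-1) \<cdot>\<^sub>m rmat K A"
    by (rule eq_matI) (auto simp: rmat_def)
  ultimately have "poly (char_poly (rmat K A)) 0 < 0"
    using k by (simp add: poly_char_poly_rmat)
  then show ?thesis
    using exists_right_of_isCont_neg[where f = "poly (char_poly (rmat K A))" and a = 0] by simp
qed

lemma exists_column_scaling_char_poly_neg:
  assumes "finite I" "K \<subseteq> I" "x > 0" "poly (char_poly (rmat K A)) x < 0"
  shows "\<exists>D. (\<forall>j\<in>I. D j > 0) \<and> poly (char_poly (rmat I (\<lambda>i j. A i j * D j))) x < 0"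
proof -
  define D where "D e j = (if j \<in> K then 1 else e)" for e :: real and j
  define g where "g e = poly (char_poly (rmat I (\<lambda>i j. A i j * D e j))) x" for e
  have "char_poly (rmat I (\<lambda>i j. A i j * D 0 j)) =
      monom 1 (card (I - K)) * char_poly (rmat (I - (I - K)) (\<lambda>i j. A i j * D 0 j))"
    using assms(1) by (rule char_poly_rmat_zero_columns) (auto simp: D_def)
  moreover have "rmat (I - (I - K)) (\<lambda>i j. A i j * D 0 j) = rmat K A"
  proof -
    have "I - (I - K) = K" using assms(2) by blast
    then show ?thesis by (auto simp: D_def intro!: rmat_cong)
  qed
  ultimately have "g 0 = x ^ card (I - K) * poly (char_poly (rmat K A)) x"
    by (simp add: g_def poly_monom)
  then have "g 0 < 0" using assms(3,4) by (simp add: mult_pos_neg)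
  moreover have "continuous_on UNIV g"
  proof -
    have "continuous_on UNIV (\<lambda>e. (if i = j then x else 0) - A i j * D e j)" for i j
      by (cases "j \<in> K") (simp_all add: D_def continuous_intros)
    then show ?thesis
      unfolding g_def poly_char_poly_rmat by (rule continuous_on_det_rmat)
  qed
  ultimately obtain e where "e > 0" "g e < 0"
    using exists_right_of_isCont_neg[where f = g and a = 0]
    by (auto simp: continuous_on_eq_continuous_at)
  then show ?thesis by (intro exI[of _ "D e"]) (auto simp: D_def g_def)
qed

lemma D_Hopf_if_column_scaling_destabilizes:
  assumes "hurwitz_stable I A" "\<forall>j\<in>I. D j > 0" "hurwitz_unstable I (\<lambda>i j. A i j * D j)"
  shows "D_Hopf I A"
proof -
  have "\<not> hurwitz_unstable I (\<lambda>i j. A i j * 1)"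
    using assms(1) by (force simp: hurwitz_stable_def hurwitz_unstable_def)
  then have "inertia I (\<lambda>i j. A i j * 1) \<noteq> inertia I (\<lambda>i j. A i j * D j)"
    using assms(3) hurwitz_unstable_iff_inertia by metis
  then show ?thesis
    unfolding D_Hopf_def using hurwitz_stable_det_nonzero[OF assms(1)] assms(2)
    by (intro exI[of _ I] conjI exI[of _ "\<lambda>_. 1"] exI[of _ D]) auto
qed

theorem mainTheorem12:
  fixes n r :: nat and s S :: "nat \<Rightarrow> nat \<Rightarrow> real"
    and \<kappa> E\<kappa> :: "nat set" and J :: "nat \<Rightarrow> nat"
  assumes "\<forall>j m. s j m \<ge> 0"
    and "child_selection n r s \<kappa> E\<kappa> J"
    and "hurwitz_stable \<kappa> (cs_matrix S J)"
    and "\<exists>K \<subseteq> \<kappa>. unstable_positive_feedback K (cs_matrix S J)"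
  shows "D_Hopf \<kappa> (cs_matrix S J)"
proof -
  let ?A = "cs_matrix S J"
  have "finite \<kappa>"
    using assms(2) finite_subset by (auto simp: child_selection_def)
  obtain K where "K \<subseteq> \<kappa>" "unstable_positive_feedback K ?A"
    using assms(4) by blast
  then obtain x where "x > 0" "poly (char_poly (rmat K ?A)) x < 0"
    using unstable_positive_feedback_char_poly_neg by blast
  then obtain D where D: "\<forall>j\<in>\<kappa>. D j > 0"
      and "poly (char_poly (rmat \<kappa> (\<lambda>i j. ?A i j * D j))) x < 0"
    using exists_column_scaling_char_poly_neg[OF \<open>finite \<kappa>\<close> \<open>K \<subseteq> \<kappa>\<close>] by blast
  then have "hurwitz_unstable \<kappa> (\<lambda>i j. ?A i j * D j)"
    using \<open>x > 0\<close> hurwitz_unstable_if_char_poly_neg by blast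
  then show ?thesis
    using D_Hopf_if_column_scaling_destabilizes[OF assms(3) D] by blast
qed

end
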